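(* Assume the following setting. For each $n$, $X\in\mathbb{R}^{n\times e}$ is deterministic with rows $x_i$; $\Gamma\in\mathbb{R}^{e\times p}$, $\sigma^2>0$, $\sigma_z^2>0$, $e,p$ are fixed; $\lambda\ge0$ and $\beta_0\in\mathbb{R}^e$ depend on $n$. Let $y=X\beta_0+\epsilon$, $Z=X\Gamma+E$, with entries of $E$ i.i.d. $N(0,\sigma_z^2)$, entries of $\epsilon$ i.i.d. $N(0,\sigma^2)$, $E,\epsilon$ independent. Assume as $n\to\infty$: $\lambda/n\to\kappa\ge0$; $\sqrt n\beta_0\to\alpha_0$; $\frac1nX^TX\to\Sigma$ positive definite; $\frac1n\mathbf{1}^TX\to\Theta\in\mathbb{R}^{1\times e}$; $\max_i\|x_i\|=o(n^{1/3})$. Let $\tilde Z=[\mathbf{1},Z]\in\mathbb{R}^{n\times(p+1)}$, and let $\tilde Z_{(i)}$, $X_{(i)}$ be $\tilde Z$, $X$ with their $i$-th rows removed. Then as $n\to\infty$, $\|\tilde Z^TX\|=O_P(n)$ and $$\max_{1\le i\le n}\|\tilde Z^TX-\tilde Z_{(i)}^TX_{(i)}\|=o_P(n).$$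
   Context: $\|M\|$ denotes the $\ell^2$ operator norm of a matrix $M$; $O_P,o_P$ refer to $n\to\infty$. *)

theory Defs
  imports "HOL-Probability.Probability"
begin

text \<open>Matrices of varying size are functions nat => nat => real with explicit bounds.\<close>

definition vnorm :: "nat \<Rightarrow> (nat \<Rightarrow> real) \<Rightarrow> real" where
  "vnorm k v = sqrt (\<Sum>j<k. (v j)^2)"

definition mat_opnorm :: "nat \<Rightarrow> nat \<Rightarrow> (nat \<Rightarrow> nat \<Rightarrow> real) \<Rightarrow> real" where
  "mat_opnorm m k A = Sup ((\<lambda>v. vnorm m (\<lambda>i. \<Sum>j<k. A i j * v j)) ` {v. vnorm k v \<le> 1})"

definition Zmat :: "nat \<Rightarrow> (nat \<Rightarrow> nat \<Rightarrow> real) \<Rightarrow> (nat \<Rightarrow> nat \<Rightarrow> real) \<Rightarrow> (nat \<Rightarrow> nat \<Rightarrow> real)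
    \<Rightarrow> nat \<Rightarrow> nat \<Rightarrow> real" where
  "Zmat e X Gam E i l = (\<Sum>k<e. X i k * Gam k l) + E i l"

definition Ztilde :: "(nat \<Rightarrow> nat \<Rightarrow> real) \<Rightarrow> nat \<Rightarrow> nat \<Rightarrow> real" where
  "Ztilde Z i j = (if j = 0 then 1 else Z i (j - 1))"

text \<open>A^T B over the rows in the index set R (R = {..<n} gives A^T B; R = {..<n}-{i} gives A_(i)^T B_(i)).\<close>
definition crossprod :: "nat set \<Rightarrow> (nat \<Rightarrow> nat \<Rightarrow> real) \<Rightarrow> (nat \<Rightarrow> nat \<Rightarrow> real) \<Rightarrow> nat \<Rightarrow> nat \<Rightarrow> real" where
  "crossprod R A B a b = (\<Sum>i\<in>R. A i a * B i b)"

definition posdef :: "nat \<Rightarrow> (nat \<Rightarrow> nat \<Rightarrow> real) \<Rightarrow> bool" where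
  "posdef e S \<longleftrightarrow> (\<forall>a<e. \<forall>b<e. S a b = S b a) \<and>
     (\<forall>v. (\<exists>k<e. v k \<noteq> 0) \<longrightarrow> (\<Sum>a<e. \<Sum>b<e. v a * S a b * v b) > 0)"

end

theory Submission
  imports Defs "HOL-Real_Asymp.Real_Asymp"
begin

text \<open>
  The operator norm is dominated by the entrywise $\ell^1$ norm, and
  $\|\sum_{i \in R} \tilde z_i x_i^T\|_1 \le \sum_{i \in R} |\tilde z_i|_1 a_i$ with $a_i = |x_i|_1$
  and $|\tilde z_i|_1 \le 1 + |\Gamma|_1 a_i + |E_i|_1$.
  For all rows this gives
  $\|\tilde Z^T X\| \le \sum_i a_i + |\Gamma|_1 \sum_i a_i^2 + \sum_i a_i |E_i|_1$; the first two
  sums are $O(n)$ because the diagonal of $X^T X / n$ converges, and the last one has expectation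
  $O(n)$, so Markov's inequality gives $O_P(n)$.
  Removing row $r$ changes $\tilde Z^T X$ by $\tilde z_r x_r^T$, whose norm is at most
  $(1 + |\Gamma|_1 a_r + p \tau) a_r$ as long as all $|E_{rl}| < \tau$. For $\tau = n^{2/3}$,
  Chebyshev's inequality and a union bound over the $n p$ noise entries make this fail with
  probability at most $p \sigma_z^2 n^{-1/3}$, while $a_r \le \sqrt e \max_i \|x_i\| = o(n^{1/3})$
  makes the bound $o(n)$ uniformly in $r$.
\<close>

section \<open>Entrywise $\ell^1$ bounds for the operator norm\<close>

definition vnorm_l1 :: "nat \<Rightarrow> (nat \<Rightarrow> real) \<Rightarrow> real" where
  "vnorm_l1 k v = (\<Sum>j<k. \<bar>v j\<bar>)"

definition mat_l1 :: "nat \<Rightarrow> nat \<Rightarrow> (nat \<Rightarrow> nat \<Rightarrow> real) \<Rightarrow> real" where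
  "mat_l1 m k A = (\<Sum>i<m. vnorm_l1 k (A i))"

lemma vnorm_l1_nonneg: "0 \<le> vnorm_l1 k v"
  unfolding vnorm_l1_def by (simp add: sum_nonneg)

lemma mat_l1_nonneg: "0 \<le> mat_l1 m k A"
  unfolding mat_l1_def by (intro sum_nonneg vnorm_l1_nonneg)

lemma power2_vnorm: "(vnorm k v)\<^sup>2 = (\<Sum>j<k. (v j)\<^sup>2)"
  by (simp add: vnorm_def sum_nonneg)

lemma vnorm_eq_L2_set: "vnorm k v = L2_set v {..<k}"
  by (simp add: vnorm_def L2_set_def)

lemma abs_le_vnorm: "j < k \<Longrightarrow> \<bar>v j\<bar> \<le> vnorm k v"
  using member_le_L2_set[of "{..<k}" j "\<lambda>i. \<bar>v i\<bar>"] by (simp add: vnorm_def L2_set_def)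

lemma vnorm_l1_le_sqrt_card_vnorm: "vnorm_l1 k v \<le> sqrt (real k) * vnorm k v"
  using L2_set_mult_ineq[of v "\<lambda>_. 1" "{..<k}"]
  by (simp add: vnorm_l1_def vnorm_eq_L2_set L2_set_constant mult.commute)

lemma vnorm_l1_le_sqrt_card_Max_vnorm:
  fixes A :: "nat \<Rightarrow> nat \<Rightarrow> real"
  assumes "r < n"
  shows "vnorm_l1 k (A r) \<le> sqrt (real k) * Max ((\<lambda>i. vnorm k (A i)) ` {..<n})"
proof -
  have "vnorm k (A r) \<le> Max ((\<lambda>i. vnorm k (A i)) ` {..<n})"
    using assms by (intro Max_ge) auto
  then show ?thesis
    by (rule order_trans[OF vnorm_l1_le_sqrt_card_vnorm mult_left_mono]) simp
qed

lemma vnorm_matvec_le_mat_l1: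
  assumes "vnorm k v \<le> 1"
  shows "vnorm m (\<lambda>i. \<Sum>j<k. A i j * v j) \<le> mat_l1 m k A"
proof -
  have "\<bar>\<Sum>j<k. A i j * v j\<bar> \<le> vnorm_l1 k (A i)" for i
  proof -
    have "\<bar>\<Sum>j<k. A i j * v j\<bar> \<le> (\<Sum>j<k. \<bar>A i j\<bar> * \<bar>v j\<bar>)"
      unfolding abs_mult[symmetric] by (rule sum_abs)
    also have "\<dots> \<le> (\<Sum>j<k. \<bar>A i j\<bar>)"
      using abs_le_vnorm[of _ k v] assms
      by (intro sum_mono mult_left_le) fastforce+
    finally show ?thesis unfolding vnorm_l1_def .
  qed
  then have "(\<Sum>i<m. \<bar>\<Sum>j<k. A i j * v j\<bar>) \<le> mat_l1 m k A"
    unfolding mat_l1_def by (intro sum_mono)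
  then show ?thesis
    using L2_set_le_sum_abs[of "\<lambda>i. \<Sum>j<k. A i j * v j" "{..<m}"]
    unfolding vnorm_eq_L2_set by linarith
qed

lemma bdd_above_matvec_image:
  "bdd_above ((\<lambda>v. vnorm m (\<lambda>i. \<Sum>j<k. A i j * v j)) ` {v. vnorm k v \<le> 1})"
  using vnorm_matvec_le_mat_l1 by (intro bdd_aboveI[of _ "mat_l1 m k A"]) blast

lemma vnorm_zero_le_1: "(\<lambda>_. 0) \<in> {v. vnorm k v \<le> (1::real)}"
  by (simp add: vnorm_def)

lemma vnorm_matvec_le_mat_opnorm:
  "vnorm k v \<le> 1 \<Longrightarrow> vnorm m (\<lambda>i. \<Sum>j<k. A i j * v j) \<le> mat_opnorm m k A"
  unfolding mat_opnorm_def by (intro cSup_upper bdd_above_matvec_image) auto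

lemma mat_opnorm_le_mat_l1: "mat_opnorm m k A \<le> mat_l1 m k A"
  unfolding mat_opnorm_def using vnorm_matvec_le_mat_l1 vnorm_zero_le_1
  by (intro cSup_least) blast+

lemma mat_opnorm_le_add_mat_l1:
  "mat_opnorm m k A \<le> mat_opnorm m k B + mat_l1 m k (\<lambda>i j. A i j - B i j)"
  unfolding mat_opnorm_def[of m k A]
proof (intro cSup_least)
  show "(\<lambda>v. vnorm m (\<lambda>i. \<Sum>j<k. A i j * v j)) ` {v. vnorm k v \<le> 1} \<noteq> {}"
    using vnorm_zero_le_1 by blast
next
  fix x assume "x \<in> (\<lambda>v. vnorm m (\<lambda>i. \<Sum>j<k. A i j * v j)) ` {v. vnorm k v \<le> 1}"
  then obtain v where v: "vnorm k v \<le> 1" and x: "x = vnorm m (\<lambda>i. \<Sum>j<k. A i j * v j)"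
    by auto
  have split: "(\<lambda>i. \<Sum>j<k. A i j * v j)
      = (\<lambda>i. (\<Sum>j<k. B i j * v j) + (\<Sum>j<k. (A i j - B i j) * v j))"
    by (auto simp: sum.distrib[symmetric] algebra_simps)
  have "x \<le> vnorm m (\<lambda>i. \<Sum>j<k. B i j * v j) + vnorm m (\<lambda>i. \<Sum>j<k. (A i j - B i j) * v j)"
    unfolding x split vnorm_eq_L2_set by (rule L2_set_triangle_ineq)
  also have "\<dots> \<le> mat_opnorm m k B + mat_l1 m k (\<lambda>i j. A i j - B i j)"
    using v by (intro add_mono vnorm_matvec_le_mat_opnorm vnorm_matvec_le_mat_l1)
  finally show "x \<le> mat_opnorm m k B + mat_l1 m k (\<lambda>i j. A i j - B i j)" .
qed

lemma mat_opnorm_cong: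
  "(\<And>i j. i < m \<Longrightarrow> j < k \<Longrightarrow> A i j = B i j) \<Longrightarrow> mat_opnorm m k A = mat_opnorm m k B"
  unfolding mat_opnorm_def vnorm_def by (intro arg_cong[where f=Sup] image_cong refl) auto

lemma continuous_on_mat_l1_diff:
  "continuous_on UNIV (\<lambda>B. mat_l1 m k (\<lambda>i j. B i j - A i j))"
proof -
  have "continuous_on UNIV (\<lambda>B::nat \<Rightarrow> nat \<Rightarrow> real. B i j)" for i j
    by (rule continuous_on_product_then_coordinatewise[OF continuous_on_product_coordinates])
  then show ?thesis
    unfolding mat_l1_def vnorm_l1_def by (intro continuous_intros)
qed

lemma continuous_on_mat_opnorm: "continuous_on UNIV (mat_opnorm m k)"
proof -
  have "isCont (mat_opnorm m k) A" for A
  proof -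
    have "isCont (\<lambda>B. mat_l1 m k (\<lambda>i j. B i j - A i j)) A"
      using continuous_on_mat_l1_diff[of m k A] by (simp add: continuous_on_eq_continuous_at)
    then have l1_lim: "((\<lambda>B. mat_l1 m k (\<lambda>i j. B i j - A i j)) \<longlongrightarrow> 0) (at A)"
      by (simp add: isCont_def mat_l1_def vnorm_l1_def)
    have "\<bar>mat_opnorm m k B - mat_opnorm m k A\<bar> \<le> mat_l1 m k (\<lambda>i j. B i j - A i j)" for B
    proof -
      have "mat_l1 m k (\<lambda>i j. A i j - B i j) = mat_l1 m k (\<lambda>i j. B i j - A i j)"
        unfolding mat_l1_def vnorm_l1_def by (simp add: abs_minus_commute)
      then show ?thesis
        using mat_opnorm_le_add_mat_l1[of m k A B] mat_opnorm_le_add_mat_l1[of m k B A] by linarith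
    qed
    then have "((\<lambda>B. mat_opnorm m k B - mat_opnorm m k A) \<longlongrightarrow> 0) (at A)"
      by (intro Lim_null_comparison[OF _ l1_lim] always_eventually) simp
    then show ?thesis unfolding isCont_def by (simp add: LIM_zero_iff)
  qed
  then show ?thesis by (simp add: continuous_at_imp_continuous_on)
qed

lemma borel_measurable_mat_opnorm:
  assumes "\<And>i j. i < m \<Longrightarrow> j < k \<Longrightarrow> (\<lambda>\<omega>. A \<omega> i j) \<in> borel_measurable N"
  shows "(\<lambda>\<omega>. mat_opnorm m k (A \<omega>)) \<in> borel_measurable N"
proof -
  define T where "T \<omega> = (\<lambda>i j. if i < m \<and> j < k then A \<omega> i j else 0)" for \<omega>
  have "(\<lambda>\<omega>. T \<omega> i j) \<in> borel_measurable N" for i j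
    unfolding T_def using assms by (cases "i < m \<and> j < k") auto
  then have "T \<in> borel_measurable N"
    by (intro measurable_coordinatewise_then_product)
  then have "(\<lambda>\<omega>. mat_opnorm m k (T \<omega>)) \<in> borel_measurable N"
    by (rule borel_measurable_continuous_on[OF continuous_on_mat_opnorm])
  moreover have "mat_opnorm m k (T \<omega>) = mat_opnorm m k (A \<omega>)" for \<omega>
    by (rule mat_opnorm_cong) (simp add: T_def)
  ultimately show ?thesis by simp
qed

section \<open>Row bounds for $\tilde Z^T X$\<close>

lemma mat_l1_crossprod_le:
  assumes "finite R"
  shows "mat_l1 m k (crossprod R A B) \<le> (\<Sum>i\<in>R. vnorm_l1 m (A i) * vnorm_l1 k (B i))"
proof -
  have "\<bar>crossprod R A B a b\<bar> \<le> (\<Sum>i\<in>R. \<bar>A i a\<bar> * \<bar>B i b\<bar>)" for a b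
    unfolding crossprod_def abs_mult[symmetric] by (rule sum_abs)
  then have "mat_l1 m k (crossprod R A B) \<le> (\<Sum>a<m. \<Sum>b<k. \<Sum>i\<in>R. \<bar>A i a\<bar> * \<bar>B i b\<bar>)"
    unfolding mat_l1_def vnorm_l1_def by (intro sum_mono)
  also have "\<dots> = (\<Sum>a<m. \<Sum>i\<in>R. \<Sum>b<k. \<bar>A i a\<bar> * \<bar>B i b\<bar>)"
    by (intro sum.cong refl sum.swap)
  also have "\<dots> = (\<Sum>i\<in>R. \<Sum>a<m. \<Sum>b<k. \<bar>A i a\<bar> * \<bar>B i b\<bar>)"
    by (rule sum.swap)
  also have "\<dots> = (\<Sum>i\<in>R. vnorm_l1 m (A i) * vnorm_l1 k (B i))"
    by (simp add: vnorm_l1_def sum_product)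
  finally show ?thesis .
qed

lemma vnorm_l1_Ztilde_le:
  "vnorm_l1 (Suc p) (Ztilde (Zmat e Xn Gam Ev) i)
     \<le> 1 + mat_l1 e p Gam * vnorm_l1 e (Xn i) + vnorm_l1 p (Ev i)"
proof -
  have entry: "\<bar>(\<Sum>k<e. Xn i k * Gam k l) + Ev i l\<bar> \<le> (\<Sum>k<e. \<bar>Xn i k\<bar> * \<bar>Gam k l\<bar>) + \<bar>Ev i l\<bar>"
    for l
  proof -
    have "\<bar>\<Sum>k<e. Xn i k * Gam k l\<bar> \<le> (\<Sum>k<e. \<bar>Xn i k\<bar> * \<bar>Gam k l\<bar>)"
      unfolding abs_mult[symmetric] by (rule sum_abs)
    then show ?thesis
      using abs_triangle_ineq[of "\<Sum>k<e. Xn i k * Gam k l" "Ev i l"] by linarith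
  qed
  have row: "vnorm_l1 p (Gam k) \<le> mat_l1 e p Gam" if "k < e" for k
    unfolding mat_l1_def using that by (intro member_le_sum vnorm_l1_nonneg) auto
  have "vnorm_l1 (Suc p) (Ztilde (Zmat e Xn Gam Ev) i)
      = 1 + (\<Sum>l<p. \<bar>(\<Sum>k<e. Xn i k * Gam k l) + Ev i l\<bar>)"
    unfolding vnorm_l1_def sum.lessThan_Suc_shift by (simp add: Ztilde_def Zmat_def)
  also have "\<dots> \<le> 1 + (\<Sum>l<p. (\<Sum>k<e. \<bar>Xn i k\<bar> * \<bar>Gam k l\<bar>) + \<bar>Ev i l\<bar>)"
    using entry by (intro add_left_mono sum_mono)
  also have "\<dots> = 1 + (\<Sum>k<e. \<Sum>l<p. \<bar>Xn i k\<bar> * \<bar>Gam k l\<bar>) + vnorm_l1 p (Ev i)"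
    by (simp add: vnorm_l1_def sum.distrib sum.swap[of _ "{..<p}" "{..<e}"])
  also have "\<dots> = 1 + (\<Sum>k<e. \<bar>Xn i k\<bar> * vnorm_l1 p (Gam k)) + vnorm_l1 p (Ev i)"
    by (simp add: vnorm_l1_def sum_distrib_left)
  also have "\<dots> \<le> 1 + (\<Sum>k<e. \<bar>Xn i k\<bar> * mat_l1 e p Gam) + vnorm_l1 p (Ev i)"
    using row by (intro add_left_mono add_right_mono sum_mono mult_left_mono) auto
  also have "\<dots> = 1 + mat_l1 e p Gam * vnorm_l1 e (Xn i) + vnorm_l1 p (Ev i)"
    by (simp add: vnorm_l1_def sum_distrib_left mult.commute)
  finally show ?thesis .
qed

lemma mat_opnorm_crossprod_Ztilde_le:
  assumes "finite R"
  shows "mat_opnorm (Suc p) e (crossprod R (Ztilde (Zmat e Xn Gam Ev)) Xn)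
    \<le> (\<Sum>i\<in>R. (1 + mat_l1 e p Gam * vnorm_l1 e (Xn i) + vnorm_l1 p (Ev i)) * vnorm_l1 e (Xn i))"
    (is "_ \<le> ?rhs")
proof -
  have "mat_opnorm (Suc p) e (crossprod R (Ztilde (Zmat e Xn Gam Ev)) Xn)
      \<le> (\<Sum>i\<in>R. vnorm_l1 (Suc p) (Ztilde (Zmat e Xn Gam Ev) i) * vnorm_l1 e (Xn i))"
    using mat_opnorm_le_mat_l1 mat_l1_crossprod_le[OF assms] by (rule order_trans)
  also have "\<dots> \<le> ?rhs"
    by (intro sum_mono mult_right_mono vnorm_l1_Ztilde_le vnorm_l1_nonneg)
  finally show ?thesis .
qed

lemma mat_opnorm_crossprod_Ztilde_le_split:
  "mat_opnorm (Suc p) e (crossprod {..<n} (Ztilde (Zmat e Xn Gam Ev)) Xn)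
     \<le> (\<Sum>i<n. vnorm_l1 e (Xn i)) + mat_l1 e p Gam * (\<Sum>i<n. (vnorm_l1 e (Xn i))\<^sup>2)
       + (\<Sum>i<n. vnorm_l1 e (Xn i) * vnorm_l1 p (Ev i))"
  using mat_opnorm_crossprod_Ztilde_le[of "{..<n}" p e Xn Gam Ev]
  by (simp add: algebra_simps sum.distrib sum_distrib_left power2_eq_square)

lemma mat_opnorm_row_crossprod_Ztilde_le:
  assumes "\<And>l. l < p \<Longrightarrow> \<bar>Ev r l\<bar> \<le> \<tau>"
  shows "mat_opnorm (Suc p) e (crossprod {r} (Ztilde (Zmat e Xn Gam Ev)) Xn)
    \<le> (1 + mat_l1 e p Gam * vnorm_l1 e (Xn r) + real p * \<tau>) * vnorm_l1 e (Xn r)"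
proof -
  have "vnorm_l1 p (Ev r) \<le> real p * \<tau>"
    unfolding vnorm_l1_def using assms sum_bounded_above[of "{..<p}" "\<lambda>l. \<bar>Ev r l\<bar>" \<tau>] by simp
  then show ?thesis
    using mat_opnorm_crossprod_Ztilde_le[of "{r}" p e Xn Gam Ev]
    by (simp add: order_trans mult_right_mono vnorm_l1_nonneg)
qed

lemma mat_opnorm_crossprod_remove_row:
  assumes "r < n"
  shows "mat_opnorm m k (\<lambda>a b. crossprod {..<n} A B a b - crossprod ({..<n} - {r}) A B a b)
    = mat_opnorm m k (crossprod {r} A B)"
  using assms by (intro mat_opnorm_cong) (simp add: crossprod_def sum.remove[of "{..<n}" r])

lemma borel_measurable_crossprod_Ztilde:
  assumes "\<And>i l. i \<in> R \<Longrightarrow> l < p \<Longrightarrow> (\<lambda>\<omega>. Ev \<omega> i l) \<in> borel_measurable N" and "a < Suc p"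
  shows "(\<lambda>\<omega>. crossprod R (Ztilde (Zmat e Xn Gam (Ev \<omega>))) Xn a b) \<in> borel_measurable N"
proof (cases a)
  case 0
  then show ?thesis by (simp add: crossprod_def Ztilde_def)
next
  case (Suc l)
  with assms(2) have "l < p" by simp
  have "(\<lambda>\<omega>. crossprod R (Ztilde (Zmat e Xn Gam (Ev \<omega>))) Xn a b)
      = (\<lambda>\<omega>. \<Sum>i\<in>R. ((\<Sum>k<e. Xn i k * Gam k l) + Ev \<omega> i l) * Xn i b)"
    by (simp add: crossprod_def Ztilde_def Zmat_def Suc)
  then show ?thesis
    using assms(1) \<open>l < p\<close> by (simp add: borel_measurable_sum)
qed

lemma abs_le_one_plus_power2: "\<bar>y::real\<bar> \<le> 1 + y\<^sup>2"
proof -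
  have "0 \<le> (\<bar>y\<bar> - 1)\<^sup>2" by simp
  then show ?thesis by (simp add: power2_diff)
qed

lemma sum_power2_vnorm_rows_le_linear:
  fixes X :: "nat \<Rightarrow> nat \<Rightarrow> nat \<Rightarrow> real"
  assumes "\<And>k. k < e \<Longrightarrow> (\<lambda>n. (\<Sum>i<n. X n i k * X n i k) / real n) \<longlonglongrightarrow> S k"
  shows "\<exists>C>0. \<forall>n. (\<Sum>i<n. (vnorm e (X n i))\<^sup>2) \<le> C * real n"
proof -
  have "(\<lambda>n. \<Sum>k<e. (\<Sum>i<n. X n i k * X n i k) / real n) \<longlonglongrightarrow> (\<Sum>k<e. S k)"
    using assms by (intro tendsto_sum) auto
  then have "Bseq (\<lambda>n. \<Sum>k<e. (\<Sum>i<n. X n i k * X n i k) / real n)"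
    by (rule convergent_imp_Bseq[OF convergentI])
  then obtain C where C: "0 < C" "\<forall>n. norm (\<Sum>k<e. (\<Sum>i<n. X n i k * X n i k) / real n) \<le> C"
    by (rule BseqE)
  have "(\<Sum>i<n. (vnorm e (X n i))\<^sup>2) \<le> C * real n" for n
  proof (cases "n = 0")
    case False
    have "(\<Sum>i<n. (vnorm e (X n i))\<^sup>2) = (\<Sum>k<e. \<Sum>i<n. X n i k * X n i k)"
      unfolding power2_vnorm unfolding power2_eq_square by (rule sum.swap)
    also have "\<dots> = real n * ((\<Sum>k<e. \<Sum>i<n. X n i k * X n i k) / real n)"
      using False by simp
    also have "\<dots> = real n * (\<Sum>k<e. (\<Sum>i<n. X n i k * X n i k) / real n)"
      by (simp only: sum_divide_distrib)
    also have "\<dots> \<le> real n * C"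
      using abs_le_D1[OF C(2)[rule_format, of n, unfolded real_norm_def]]
      by (intro mult_left_mono) auto
    finally show ?thesis by (simp add: mult.commute)
  qed simp
  with C(1) show ?thesis by blast
qed

lemma sum_vnorm_l1_rows_le:
  assumes "(\<Sum>i<n. (vnorm e (Xn i))\<^sup>2) \<le> C * real n"
  shows "(\<Sum>i<n. (vnorm_l1 e (Xn i))\<^sup>2) \<le> real e * C * real n"
    and "(\<Sum>i<n. vnorm_l1 e (Xn i)) \<le> (1 + real e * C) * real n"
proof -
  have "(vnorm_l1 e (Xn i))\<^sup>2 \<le> (sqrt (real e) * vnorm e (Xn i))\<^sup>2" for i
    by (intro power_mono vnorm_l1_le_sqrt_card_vnorm vnorm_l1_nonneg)
  then have "(\<Sum>i<n. (vnorm_l1 e (Xn i))\<^sup>2) \<le> (\<Sum>i<n. real e * (vnorm e (Xn i))\<^sup>2)"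
    by (intro sum_mono) (simp add: power_mult_distrib)
  also have "\<dots> \<le> real e * (C * real n)"
    using assms by (simp add: sum_distrib_left[symmetric] mult_left_mono)
  finally show sq: "(\<Sum>i<n. (vnorm_l1 e (Xn i))\<^sup>2) \<le> real e * C * real n"
    by (simp add: mult.assoc)
  have "(\<Sum>i<n. vnorm_l1 e (Xn i)) \<le> (\<Sum>i<n. 1 + (vnorm_l1 e (Xn i))\<^sup>2)"
    using abs_le_one_plus_power2 vnorm_l1_nonneg by (intro sum_mono) (metis abs_of_nonneg)
  also have "\<dots> \<le> real n + real e * C * real n"
    using sq by (simp add: sum.distrib)
  finally show "(\<Sum>i<n. vnorm_l1 e (Xn i)) \<le> (1 + real e * C) * real n"
    by (simp add: algebra_simps)
qed

section \<open>Moment and tail bounds\<close>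

lemma normal_centered_second_moment:
  fixes Y :: "'a \<Rightarrow> real"
  assumes "prob_space N" "distributed N lborel Y (normal_density 0 (sqrt s))" "0 < s"
  shows "integrable N (\<lambda>\<omega>. (Y \<omega>)\<^sup>2)" "(\<integral>\<omega>. (Y \<omega>)\<^sup>2 \<partial>N) = s"
proof -
  interpret prob_space N by fact
  have sqrt_s: "0 < sqrt s" using assms(3) by simp
  have "integrable lborel (\<lambda>x. normal_density 0 (sqrt s) x * (x - 0)\<^sup>2)"
    by (rule integrable_normal_moment[OF sqrt_s])
  then show "integrable N (\<lambda>\<omega>. (Y \<omega>)\<^sup>2)"
    using distributed_integrable[OF assms(2), of "\<lambda>x. x\<^sup>2"] by (simp del: normal_density_def)
  have "expectation Y = 0" by (rule normal_distributed_expectation[OF sqrt_s assms(2)])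
  moreover have "variance Y = (sqrt s)\<^sup>2" by (rule normal_distributed_variance[OF sqrt_s assms(2)])
  ultimately show "(\<integral>\<omega>. (Y \<omega>)\<^sup>2 \<partial>N) = s" using assms(3) by simp
qed

lemma abs_integral_le_one_plus_second_moment:
  fixes Y :: "'a \<Rightarrow> real"
  assumes "prob_space N" "Y \<in> borel_measurable N" "integrable N (\<lambda>\<omega>. (Y \<omega>)\<^sup>2)"
  shows "integrable N (\<lambda>\<omega>. \<bar>Y \<omega>\<bar>)" "(\<integral>\<omega>. \<bar>Y \<omega>\<bar> \<partial>N) \<le> 1 + (\<integral>\<omega>. (Y \<omega>)\<^sup>2 \<partial>N)"
proof -
  interpret prob_space N by fact
  show abs_int: "integrable N (\<lambda>\<omega>. \<bar>Y \<omega>\<bar>)"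
    using square_integrable_imp_integrable[OF assms(2,3)] by (rule integrable_abs)
  have "(\<integral>\<omega>. \<bar>Y \<omega>\<bar> \<partial>N) \<le> (\<integral>\<omega>. 1 + (Y \<omega>)\<^sup>2 \<partial>N)"
    using assms(3) by (intro integral_mono abs_int abs_le_one_plus_power2) auto
  also have "\<dots> = 1 + (\<integral>\<omega>. (Y \<omega>)\<^sup>2 \<partial>N)"
    using assms(3) by (simp add: prob_space)
  finally show "(\<integral>\<omega>. \<bar>Y \<omega>\<bar> \<partial>N) \<le> 1 + (\<integral>\<omega>. (Y \<omega>)\<^sup>2 \<partial>N)" .
qed

lemma prob_abs_ge_le_second_moment:
  fixes Y :: "'a \<Rightarrow> real"
  assumes "integrable N (\<lambda>\<omega>. (Y \<omega>)\<^sup>2)" "0 < a"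
  shows "measure N {\<omega> \<in> space N. a \<le> \<bar>Y \<omega>\<bar>} \<le> (\<integral>\<omega>. (Y \<omega>)\<^sup>2 \<partial>N) / a\<^sup>2"
proof -
  have "{\<omega> \<in> space N. a \<le> \<bar>Y \<omega>\<bar>} = {\<omega> \<in> space N. a\<^sup>2 \<le> (Y \<omega>)\<^sup>2}"
    using assms(2) abs_le_square_iff[of a] by auto
  also have "measure N \<dots> \<le> (\<integral>\<omega>. (Y \<omega>)\<^sup>2 \<partial>N) / a\<^sup>2"
    using assms by (intro integral_Markov_inequality_measure[where A="space N"]) auto
  finally show ?thesis .
qed

lemma prob_ge_by_Markov:
  fixes R :: "'a \<Rightarrow> real"
  assumes "prob_space N" and R: "integrable N R" "\<And>\<omega>. 0 \<le> R \<omega>"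
    and c: "(\<integral>\<omega>. R \<omega> \<partial>N) \<le> c" "0 < c" and "0 < \<delta>"
    and A: "A \<in> sets N" "\<And>\<omega>. \<omega> \<in> space N \<Longrightarrow> R \<omega> < c / \<delta> \<Longrightarrow> \<omega> \<in> A"
  shows "1 - \<delta> \<le> measure N A"
proof -
  interpret prob_space N by fact
  let ?B = "{\<omega> \<in> space N. c / \<delta> \<le> R \<omega>}"
  have [measurable]: "R \<in> borel_measurable N" using R(1) by (rule borel_measurable_integrable)
  have "measure N ?B \<le> (\<integral>\<omega>. R \<omega> \<partial>N) / (c / \<delta>)"
    using R c \<open>0 < \<delta>\<close> by (intro integral_Markov_inequality_measure[where A="space N"]) auto
  also have "\<dots> \<le> \<delta>"
    using c \<open>0 < \<delta>\<close> by (simp add: field_simps)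
  finally have "1 - \<delta> \<le> measure N (space N - ?B)"
    by (subst prob_compl) auto
  also have "\<dots> \<le> measure N A"
  proof (rule finite_measure_mono[OF _ A(1)])
    show "space N - ?B \<subseteq> A"
    proof
      fix \<omega> assume "\<omega> \<in> space N - ?B"
      then show "\<omega> \<in> A" by (intro A(2)) auto
    qed
  qed
  finally show ?thesis .
qed

lemma prob_ge_by_union_bound:
  fixes Y :: "'i \<Rightarrow> 'a \<Rightarrow> real"
  assumes "prob_space N" "finite I" and Y: "\<And>j. j \<in> I \<Longrightarrow> Y j \<in> borel_measurable N"
    and tail: "\<And>j. j \<in> I \<Longrightarrow> measure N {\<omega> \<in> space N. \<tau> \<le> \<bar>Y j \<omega>\<bar>} \<le> c"
    and A: "A \<in> sets N" "\<And>\<omega>. \<omega> \<in> space N \<Longrightarrow> \<forall>j\<in>I. \<bar>Y j \<omega>\<bar> < \<tau> \<Longrightarrow> \<omega> \<in> A"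
  shows "1 - real (card I) * c \<le> measure N A"
proof -
  interpret prob_space N by fact
  let ?B = "\<Union>j\<in>I. {\<omega> \<in> space N. \<tau> \<le> \<bar>Y j \<omega>\<bar>}"
  have B_sets: "(\<lambda>j. {\<omega> \<in> space N. \<tau> \<le> \<bar>Y j \<omega>\<bar>}) ` I \<subseteq> sets N"
  proof (intro image_subsetI)
    fix j assume "j \<in> I"
    then have [measurable]: "Y j \<in> borel_measurable N" by (rule Y)
    show "{\<omega> \<in> space N. \<tau> \<le> \<bar>Y j \<omega>\<bar>} \<in> sets N" by measurable
  qed
  have "measure N ?B \<le> (\<Sum>j\<in>I. measure N {\<omega> \<in> space N. \<tau> \<le> \<bar>Y j \<omega>\<bar>})"
    using B_sets \<open>finite I\<close> by (intro finite_measure_subadditive_finite) auto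
  also have "\<dots> \<le> real (card I) * c"
    using tail by (rule sum_bounded_above)
  finally have "1 - real (card I) * c \<le> measure N (space N - ?B)"
    using B_sets \<open>finite I\<close> by (subst prob_compl) auto
  also have "\<dots> \<le> measure N A"
  proof (rule finite_measure_mono[OF _ A(1)])
    show "space N - ?B \<subseteq> A"
    proof
      fix \<omega> assume "\<omega> \<in> space N - ?B"
      then show "\<omega> \<in> A" by (intro A(2)) auto
    qed
  qed
  finally show ?thesis .
qed

lemma integral_weighted_vnorm_l1_le:
  fixes Ev :: "'a \<Rightarrow> nat \<Rightarrow> nat \<Rightarrow> real"
  assumes int: "\<And>i l. i < n \<Longrightarrow> l < p \<Longrightarrow> integrable N (\<lambda>\<omega>. \<bar>Ev \<omega> i l\<bar>)"
    and bound: "\<And>i l. i < n \<Longrightarrow> l < p \<Longrightarrow> (\<integral>\<omega>. \<bar>Ev \<omega> i l\<bar> \<partial>N) \<le> c"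
    and w: "\<And>i. 0 \<le> w i"
  shows "integrable N (\<lambda>\<omega>. \<Sum>i<n. w i * vnorm_l1 p (Ev \<omega> i))"
    and "(\<integral>\<omega>. (\<Sum>i<n. w i * vnorm_l1 p (Ev \<omega> i)) \<partial>N) \<le> real p * c * (\<Sum>i<n. w i)"
proof -
  show "integrable N (\<lambda>\<omega>. \<Sum>i<n. w i * vnorm_l1 p (Ev \<omega> i))"
    unfolding vnorm_l1_def using int
    by (intro Bochner_Integration.integrable_sum integrable_mult_right) auto
  have "(\<integral>\<omega>. (\<Sum>i<n. w i * vnorm_l1 p (Ev \<omega> i)) \<partial>N)
      = (\<Sum>i<n. \<integral>\<omega>. w i * (\<Sum>l<p. \<bar>Ev \<omega> i l\<bar>) \<partial>N)"
    unfolding vnorm_l1_def using int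
    by (intro Bochner_Integration.integral_sum integrable_mult_right
        Bochner_Integration.integrable_sum) auto
  also have "\<dots> = (\<Sum>i<n. w i * (\<integral>\<omega>. (\<Sum>l<p. \<bar>Ev \<omega> i l\<bar>) \<partial>N))"
    by (simp only: integral_mult_right_zero)
  also have "\<dots> = (\<Sum>i<n. w i * (\<Sum>l<p. \<integral>\<omega>. \<bar>Ev \<omega> i l\<bar> \<partial>N))"
    using int by (intro sum.cong refl arg_cong2[where f = "(*)"] Bochner_Integration.integral_sum) auto
  also have "\<dots> \<le> (\<Sum>i<n. w i * (real p * c))"
  proof (intro sum_mono mult_left_mono w)
    fix i assume "i \<in> {..<n}"
    then show "(\<Sum>l<p. \<integral>\<omega>. \<bar>Ev \<omega> i l\<bar> \<partial>N) \<le> real p * c"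
      using sum_bounded_above[of "{..<p}" "\<lambda>l. \<integral>\<omega>. \<bar>Ev \<omega> i l\<bar> \<partial>N" c] bound by simp
  qed
  also have "\<dots> = real p * c * (\<Sum>i<n. w i)"
    by (simp add: sum_distrib_left mult_ac)
  finally show "(\<integral>\<omega>. (\<Sum>i<n. w i * vnorm_l1 p (Ev \<omega> i)) \<partial>N) \<le> real p * c * (\<Sum>i<n. w i)" .
qed

lemma integral_weighted_vnorm_l1_normal_le:
  fixes Ev :: "'a \<Rightarrow> nat \<Rightarrow> nat \<Rightarrow> real"
  assumes N: "prob_space N" and "0 < s"
    and dist: "\<And>i l. i < n \<Longrightarrow> l < p \<Longrightarrow>
      distributed N lborel (\<lambda>\<omega>. Ev \<omega> i l) (normal_density 0 (sqrt s))"
    and w: "\<And>i. 0 \<le> w i"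
  shows "integrable N (\<lambda>\<omega>. \<Sum>i<n. w i * vnorm_l1 p (Ev \<omega> i))"
    and "(\<integral>\<omega>. (\<Sum>i<n. w i * vnorm_l1 p (Ev \<omega> i)) \<partial>N) \<le> real p * (1 + s) * (\<Sum>i<n. w i)"
proof -
  have meas: "(\<lambda>\<omega>. Ev \<omega> i l) \<in> borel_measurable N" if "i < n" "l < p" for i l
    using distributed_measurable[OF dist[OF that]] by simp
  note moments = normal_centered_second_moment[OF N dist \<open>0 < s\<close>]
  note abs_moments = abs_integral_le_one_plus_second_moment[OF N meas moments(1)]
  have abs_bounds: "integrable N (\<lambda>\<omega>. \<bar>Ev \<omega> i l\<bar>)" "(\<integral>\<omega>. \<bar>Ev \<omega> i l\<bar> \<partial>N) \<le> 1 + s"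
    if "i < n" "l < p" for i l
    using abs_moments(1,2)[OF that that] moments(2)[OF that] by simp_all
  show "integrable N (\<lambda>\<omega>. \<Sum>i<n. w i * vnorm_l1 p (Ev \<omega> i))"
    by (rule integral_weighted_vnorm_l1_le(1)[OF abs_bounds w])
  show "(\<integral>\<omega>. (\<Sum>i<n. w i * vnorm_l1 p (Ev \<omega> i)) \<partial>N) \<le> real p * (1 + s) * (\<Sum>i<n. w i)"
    by (rule integral_weighted_vnorm_l1_le(2)[OF abs_bounds w])
qed

section \<open>Boundedness and leave-one-out stability in probability\<close>

lemma tendsto_row_bound_div_n:
  fixes m :: "nat \<Rightarrow> real"
  assumes "(\<lambda>n. m n / real n powr (1/3)) \<longlonglongrightarrow> 0"
  shows "(\<lambda>n. (1 + G * m n + q * real n powr (2/3)) * m n / real n) \<longlonglongrightarrow> 0"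
proof -
  define u where "u n = m n / real n powr (1/3)" for n
  have u: "u \<longlonglongrightarrow> 0" using assms by (simp add: u_def[abs_def])
  have r1: "(\<lambda>n. 1 / real n powr (1/3)) \<longlonglongrightarrow> 0" and r2: "(\<lambda>n. 1 / real n powr (2/3)) \<longlonglongrightarrow> 0"
    by real_asymp+
  have "(\<lambda>n. u n * (1 / real n powr (2/3)) + G * (u n)\<^sup>2 * (1 / real n powr (1/3)) + q * u n)
      \<longlonglongrightarrow> 0 * 0 + G * 0\<^sup>2 * 0 + q * 0"
    by (intro tendsto_intros u r1 r2)
  then have lim: "(\<lambda>n. u n * (1 / real n powr (2/3)) + G * (u n)\<^sup>2 * (1 / real n powr (1/3)) + q * u n)
      \<longlonglongrightarrow> 0"
    by simp
  have "u n * (1 / real n powr (2/3)) + G * (u n)\<^sup>2 * (1 / real n powr (1/3)) + q * u n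
      = (1 + G * m n + q * real n powr (2/3)) * m n / real n" if "0 < n" for n
  proof -
    define r where "r = real n powr (1/3)"
    have "0 < r" using that by (simp add: r_def)
    have r2: "real n powr (2/3) = r * r"
      using powr_add[of "real n" "1/3" "1/3"] by (simp add: r_def)
    have r3: "real n = r * r * r"
      using powr_add[of "real n" "2/3" "1/3"] that by (simp add: r2 r_def)
    have r1: "real n powr (1/3) = r" by (simp add: r_def)
    have m: "m n = u n * r" using \<open>0 < r\<close> by (simp add: u_def r1)
    show ?thesis
      using \<open>0 < r\<close> unfolding r1 r2 m by (simp add: r3 field_simps power2_eq_square)
  qed
  then have "eventually (\<lambda>n. u n * (1 / real n powr (2/3)) + G * (u n)\<^sup>2 * (1 / real n powr (1/3))
      + q * u n = (1 + G * m n + q * real n powr (2/3)) * m n / real n) sequentially"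
    using eventually_gt_at_top[of 0] by (rule eventually_mono[rotated])
  with lim show ?thesis by (rule Lim_transform_eventually)
qed

lemma tendsto_one_minus_union_bound: "(\<lambda>n. 1 - c * (real n / (real n powr (2/3))\<^sup>2)) \<longlonglongrightarrow> 1"
proof -
  have "(\<lambda>n. real n / (real n powr (2/3))\<^sup>2) \<longlonglongrightarrow> 0"
    by real_asymp
  from tendsto_diff[OF tendsto_const tendsto_mult_right_zero[OF this, of c]] show ?thesis
    by simp
qed

lemma crossprod_Ztilde_prob_bound:
  fixes Ev :: "'a \<Rightarrow> nat \<Rightarrow> nat \<Rightarrow> real"
  assumes N: "prob_space N" and "0 < s"
    and dist: "\<And>i l. i < n \<Longrightarrow> l < p \<Longrightarrow>
      distributed N lborel (\<lambda>\<omega>. Ev \<omega> i l) (normal_density 0 (sqrt s))"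
    and C: "(\<Sum>i<n. (vnorm e (Xn i))\<^sup>2) \<le> C * real n" "0 \<le> C" and "0 < n" "0 < \<delta>"
  defines "c \<equiv> real p * (1 + s) * (1 + real e * C) + 1"
  shows "1 - \<delta> \<le> measure N {\<omega> \<in> space N.
      mat_opnorm (Suc p) e (crossprod {..<n} (Ztilde (Zmat e Xn Gam (Ev \<omega>))) Xn)
        \<le> ((1 + real e * C) + mat_l1 e p Gam * (real e * C) + c / \<delta>) * real n}"
proof -
  let ?a = "\<lambda>i. vnorm_l1 e (Xn i)"
  define R where "R \<omega> = (\<Sum>i<n. ?a i * vnorm_l1 p (Ev \<omega> i))" for \<omega>
  have meas: "(\<lambda>\<omega>. Ev \<omega> i l) \<in> borel_measurable N" if "i < n" "l < p" for i l
    using distributed_measurable[OF dist[OF that]] by simp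
  have R_int: "integrable N R"
    unfolding R_def by (rule integral_weighted_vnorm_l1_normal_le(1)[OF N \<open>0 < s\<close> dist vnorm_l1_nonneg])
  have "(\<integral>\<omega>. R \<omega> \<partial>N) \<le> real p * (1 + s) * (\<Sum>i<n. ?a i)"
    unfolding R_def by (rule integral_weighted_vnorm_l1_normal_le(2)[OF N \<open>0 < s\<close> dist vnorm_l1_nonneg])
  also have "\<dots> \<le> real p * (1 + s) * ((1 + real e * C) * real n)"
    using sum_vnorm_l1_rows_le(2)[OF C(1)] \<open>0 < s\<close> by (intro mult_left_mono) auto
  also have "\<dots> \<le> c * real n"
    by (simp add: c_def algebra_simps)
  finally have R_exp: "(\<integral>\<omega>. R \<omega> \<partial>N) \<le> c * real n" .
  have c: "0 < c * real n"
    using \<open>0 < s\<close> C(2) \<open>0 < n\<close> unfolding c_def by (simp add: add_nonneg_pos)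
  show ?thesis
  proof (rule prob_ge_by_Markov[OF N R_int _ R_exp c \<open>0 < \<delta>\<close>])
    show "0 \<le> R \<omega>" for \<omega>
      unfolding R_def by (intro sum_nonneg mult_nonneg_nonneg vnorm_l1_nonneg)
    have "(\<lambda>\<omega>. mat_opnorm (Suc p) e (crossprod {..<n} (Ztilde (Zmat e Xn Gam (Ev \<omega>))) Xn))
        \<in> borel_measurable N"
      using meas by (intro borel_measurable_mat_opnorm borel_measurable_crossprod_Ztilde) auto
    then show "{\<omega> \<in> space N. mat_opnorm (Suc p) e (crossprod {..<n} (Ztilde (Zmat e Xn Gam (Ev \<omega>))) Xn)
        \<le> ((1 + real e * C) + mat_l1 e p Gam * (real e * C) + c / \<delta>) * real n} \<in> sets N"
      by measurable
  next
    fix \<omega> assume "\<omega> \<in> space N" "R \<omega> < c * real n / \<delta>"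
    have "mat_opnorm (Suc p) e (crossprod {..<n} (Ztilde (Zmat e Xn Gam (Ev \<omega>))) Xn)
        \<le> (\<Sum>i<n. ?a i) + mat_l1 e p Gam * (\<Sum>i<n. (?a i)\<^sup>2) + R \<omega>"
      unfolding R_def by (rule mat_opnorm_crossprod_Ztilde_le_split)
    also have "\<dots> \<le> (1 + real e * C) * real n + mat_l1 e p Gam * (real e * C * real n) + c * real n / \<delta>"
      using sum_vnorm_l1_rows_le[OF C(1)] \<open>R \<omega> < c * real n / \<delta>\<close>
      by (intro add_mono mult_left_mono mat_l1_nonneg) auto
    finally show "\<omega> \<in> {\<omega> \<in> space N. mat_opnorm (Suc p) e (crossprod {..<n} (Ztilde (Zmat e Xn Gam (Ev \<omega>))) Xn)
        \<le> ((1 + real e * C) + mat_l1 e p Gam * (real e * C) + c / \<delta>) * real n}"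
      using \<open>\<omega> \<in> space N\<close> by (simp add: algebra_simps)
  qed
qed

lemma leave_one_out_prob_bound:
  fixes Ev :: "'a \<Rightarrow> nat \<Rightarrow> nat \<Rightarrow> real"
  assumes N: "prob_space N" and "0 < s"
    and dist: "\<And>i l. i < n \<Longrightarrow> l < p \<Longrightarrow>
      distributed N lborel (\<lambda>\<omega>. Ev \<omega> i l) (normal_density 0 (sqrt s))"
    and "0 < n" "0 < \<tau>"
    and row: "\<And>r. r < n \<Longrightarrow> (1 + mat_l1 e p Gam * vnorm_l1 e (Xn r) + real p * \<tau>) * vnorm_l1 e (Xn r) \<le> \<beta>"
  shows "1 - real p * s * (real n / \<tau>\<^sup>2) \<le> measure N {\<omega> \<in> space N.
      Max ((\<lambda>r. mat_opnorm (Suc p) e (\<lambda>a b. crossprod {..<n} (Ztilde (Zmat e Xn Gam (Ev \<omega>))) Xn a b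
                 - crossprod ({..<n} - {r}) (Ztilde (Zmat e Xn Gam (Ev \<omega>))) Xn a b)) ` {..<n}) \<le> \<beta>}"
    (is "_ \<le> measure N ?F")
proof -
  let ?D = "\<lambda>\<omega> r. mat_opnorm (Suc p) e (crossprod {r} (Ztilde (Zmat e Xn Gam (Ev \<omega>))) Xn)"
  have meas: "(\<lambda>\<omega>. Ev \<omega> i l) \<in> borel_measurable N" if "i < n" "l < p" for i l
    using distributed_measurable[OF dist[OF that]] by simp
  have "(\<lambda>r. mat_opnorm (Suc p) e (\<lambda>a b. crossprod {..<n} (Ztilde (Zmat e Xn Gam (Ev \<omega>))) Xn a b
                 - crossprod ({..<n} - {r}) (Ztilde (Zmat e Xn Gam (Ev \<omega>))) Xn a b)) ` {..<n}
      = (\<lambda>r. ?D \<omega> r) ` {..<n}" for \<omega>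
    by (rule image_cong[OF refl mat_opnorm_crossprod_remove_row]) simp
  then have F_eq: "?F = {\<omega> \<in> space N. \<forall>r\<in>{..<n}. ?D \<omega> r \<le> \<beta>}"
    using \<open>0 < n\<close> by (simp only:) (subst Max_le_iff; auto)
  have F_sets: "?F \<in> sets N"
    unfolding F_eq
  proof (intro sets.sets_Collect_finite_All)
    fix r assume "r \<in> {..<n}"
    then have "(\<lambda>\<omega>. ?D \<omega> r) \<in> borel_measurable N"
      using meas by (intro borel_measurable_mat_opnorm borel_measurable_crossprod_Ztilde) auto
    then show "{\<omega> \<in> space N. ?D \<omega> r \<le> \<beta>} \<in> sets N" by measurable
  qed simp
  have "1 - real (card ({..<n} \<times> {..<p})) * (s / \<tau>\<^sup>2) \<le> measure N ?F"
  proof (rule prob_ge_by_union_bound[OF N, where Y = "\<lambda>il \<omega>. Ev \<omega> (fst il) (snd il)"])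
    fix il assume il: "il \<in> {..<n} \<times> {..<p}"
    then show "(\<lambda>\<omega>. Ev \<omega> (fst il) (snd il)) \<in> borel_measurable N"
      using meas by auto
    note moments = normal_centered_second_moment[OF N dist \<open>0 < s\<close>]
    show "measure N {\<omega> \<in> space N. \<tau> \<le> \<bar>Ev \<omega> (fst il) (snd il)\<bar>} \<le> s / \<tau>\<^sup>2"
      using prob_abs_ge_le_second_moment[OF moments(1) \<open>0 < \<tau>\<close>] moments(2) il by auto
  next
    fix \<omega> assume "\<omega> \<in> space N" and small: "\<forall>il\<in>{..<n} \<times> {..<p}. \<bar>Ev \<omega> (fst il) (snd il)\<bar> < \<tau>"
    have "?D \<omega> r \<le> \<beta>" if "r < n" for r
      using small that by (intro order_trans[OF mat_opnorm_row_crossprod_Ztilde_le row]) force+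
    then show "\<omega> \<in> ?F" using \<open>\<omega> \<in> space N\<close> by (simp add: F_eq)
  qed (use F_sets in simp_all)
  then show ?thesis by (simp add: field_simps)
qed

lemma crossprod_Ztilde_bounded_in_probability:
  fixes M :: "nat \<Rightarrow> 'w measure" and X :: "nat \<Rightarrow> nat \<Rightarrow> nat \<Rightarrow> real"
    and E :: "nat \<Rightarrow> 'w \<Rightarrow> nat \<Rightarrow> nat \<Rightarrow> real"
  assumes prob: "\<And>n. prob_space (M n)" and "0 < sigz2"
    and distE: "\<And>n i l. i < n \<Longrightarrow> l < p \<Longrightarrow>
      distributed (M n) lborel (\<lambda>\<omega>. E n \<omega> i l) (normal_density 0 (sqrt sigz2))"
    and gram: "\<And>k. k < e \<Longrightarrow> (\<lambda>n. (\<Sum>i<n. X n i k * X n i k) / real n) \<longlonglongrightarrow> S k"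
    and "0 < \<delta>"
  shows "\<exists>K N. \<forall>n\<ge>N. measure (M n) {\<omega> \<in> space (M n).
      mat_opnorm (Suc p) e (crossprod {..<n} (Ztilde (Zmat e (X n) Gam (E n \<omega>))) (X n))
        \<le> K * real n} \<ge> 1 - \<delta>"
proof -
  obtain C where C: "0 < C" "\<forall>n. (\<Sum>i<n. (vnorm e (X n i))\<^sup>2) \<le> C * real n"
    using sum_power2_vnorm_rows_le_linear[where X = X and e = e and S = S, OF gram] by blast
  define K where "K = (1 + real e * C) + mat_l1 e p Gam * (real e * C)
    + (real p * (1 + sigz2) * (1 + real e * C) + 1) / \<delta>"
  have "1 - \<delta> \<le> measure (M n) {\<omega> \<in> space (M n).
      mat_opnorm (Suc p) e (crossprod {..<n} (Ztilde (Zmat e (X n) Gam (E n \<omega>))) (X n))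
        \<le> K * real n}" if "1 \<le> n" for n
    unfolding K_def using C(1) that \<open>0 < \<delta>\<close>
    by (intro crossprod_Ztilde_prob_bound[where N = "M n" and Ev = "E n" and Xn = "X n",
        OF prob \<open>0 < sigz2\<close> distE[of _ n] C(2)[rule_format]]) auto
  then show ?thesis by blast
qed

lemma leave_one_out_crossprod_Ztilde_small_in_probability:
  fixes M :: "nat \<Rightarrow> 'w measure" and X :: "nat \<Rightarrow> nat \<Rightarrow> nat \<Rightarrow> real"
    and E :: "nat \<Rightarrow> 'w \<Rightarrow> nat \<Rightarrow> nat \<Rightarrow> real"
  assumes prob: "\<And>n. prob_space (M n)" and "0 < sigz2"
    and distE: "\<And>n i l. i < n \<Longrightarrow> l < p \<Longrightarrow>
      distributed (M n) lborel (\<lambda>\<omega>. E n \<omega> i l) (normal_density 0 (sqrt sigz2))"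
    and maxrow: "(\<lambda>n. Max ((\<lambda>i. vnorm e (X n i)) ` {..<n}) / real n powr (1/3)) \<longlonglongrightarrow> 0"
    and "0 < \<eta>"
  shows "(\<lambda>n. measure (M n) {\<omega> \<in> space (M n).
      Max ((\<lambda>r. mat_opnorm (Suc p) e
             (\<lambda>a b. crossprod {..<n} (Ztilde (Zmat e (X n) Gam (E n \<omega>))) (X n) a b
                  - crossprod ({..<n} - {r}) (Ztilde (Zmat e (X n) Gam (E n \<omega>))) (X n) a b))
           ` {..<n}) \<le> \<eta> * real n}) \<longlonglongrightarrow> 1"
    (is "(\<lambda>n. measure (M n) (?F n)) \<longlonglongrightarrow> 1")
proof -
  define m where "m n = sqrt (real e) * Max ((\<lambda>i. vnorm e (X n i)) ` {..<n})" for n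
  define \<tau> where "\<tau> n = real n powr (2/3)" for n
  let ?G = "mat_l1 e p Gam"
  have "(\<lambda>n. m n / real n powr (1/3)) \<longlonglongrightarrow> 0"
    using tendsto_mult_right_zero[OF maxrow, of "sqrt (real e)"] by (simp add: m_def)
  then have "(\<lambda>n. (1 + ?G * m n + real p * \<tau> n) * m n / real n) \<longlonglongrightarrow> 0"
    unfolding \<tau>_def by (rule tendsto_row_bound_div_n)
  then have small: "eventually (\<lambda>n. (1 + ?G * m n + real p * \<tau> n) * m n / real n < \<eta>) sequentially"
    using \<open>0 < \<eta>\<close> by (rule order_tendstoD)
  note lower = tendsto_one_minus_union_bound[of "real p * sigz2", folded \<tau>_def]
  show ?thesis
  proof (rule tendsto_sandwich[OF _ _ lower tendsto_const])
    show "eventually (\<lambda>n. measure (M n) (?F n) \<le> 1) sequentially"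
      by (simp add: prob_space.prob_le_1[OF prob])
    show "eventually (\<lambda>n. 1 - real p * sigz2 * (real n / (\<tau> n)\<^sup>2) \<le> measure (M n) (?F n)) sequentially"
      using small eventually_gt_at_top[of 0]
    proof eventually_elim
      case (elim n)
      show ?case
      proof (rule leave_one_out_prob_bound[OF prob \<open>0 < sigz2\<close> distE \<open>0 < n\<close>])
        show "0 < \<tau> n" using elim(2) by (simp add: \<tau>_def)
      next
        fix r assume "r < n"
        then have "vnorm_l1 e (X n r) \<le> m n"
          unfolding m_def by (rule vnorm_l1_le_sqrt_card_Max_vnorm)
        then have "(1 + ?G * vnorm_l1 e (X n r) + real p * \<tau> n) * vnorm_l1 e (X n r)
            \<le> (1 + ?G * m n + real p * \<tau> n) * m n"
          using vnorm_l1_nonneg[of e "X n r"] mat_l1_nonneg[of e p Gam]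
          by (intro mult_mono add_mono mult_left_mono) (auto simp: \<tau>_def)
        also have "\<dots> \<le> \<eta> * real n"
          using elim by (simp add: pos_divide_less_eq)
        finally show "(1 + ?G * vnorm_l1 e (X n r) + real p * \<tau> n) * vnorm_l1 e (X n r)
            \<le> \<eta> * real n" .
      qed
    qed
  qed
qed

theorem lemma4:
  fixes M :: "nat \<Rightarrow> 'w measure"
    and X :: "nat \<Rightarrow> nat \<Rightarrow> nat \<Rightarrow> real"
    and Gam :: "nat \<Rightarrow> nat \<Rightarrow> real"
    and E :: "nat \<Rightarrow> 'w \<Rightarrow> nat \<Rightarrow> nat \<Rightarrow> real"
    and eps :: "nat \<Rightarrow> 'w \<Rightarrow> nat \<Rightarrow> real"
    and lam :: "nat \<Rightarrow> real"
    and beta0 :: "nat \<Rightarrow> nat \<Rightarrow> real"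
    and e p :: nat
    and sig2 sigz2 kappa :: real
    and alpha0 Theta :: "nat \<Rightarrow> real"
    and Sigma :: "nat \<Rightarrow> nat \<Rightarrow> real"
  assumes prob: "\<And>n. prob_space (M n)"
    and sig2: "sig2 > 0" and sigz2: "sigz2 > 0"
    and distE: "\<And>n i l. i < n \<Longrightarrow> l < p \<Longrightarrow>
       distributed (M n) lborel (\<lambda>\<omega>. E n \<omega> i l) (normal_density 0 (sqrt sigz2))"
    and distEps: "\<And>n i. i < n \<Longrightarrow>
       distributed (M n) lborel (\<lambda>\<omega>. eps n \<omega> i) (normal_density 0 (sqrt sig2))"
    and indep: "\<And>n. prob_space.indep_vars (M n) (\<lambda>_. borel)
       (\<lambda>k \<omega>. case k of Inl (i, l) \<Rightarrow> E n \<omega> i l | Inr i \<Rightarrow> eps n \<omega> i)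
       (({..<n} \<times> {..<p}) <+> {..<n})"
    and lam_nonneg: "\<And>n. lam n \<ge> 0"
    and kappa: "kappa \<ge> 0" and lam_lim: "(\<lambda>n. lam n / real n) \<longlonglongrightarrow> kappa"
    and beta_lim: "\<And>k. k < e \<Longrightarrow> (\<lambda>n. sqrt (real n) * beta0 n k) \<longlonglongrightarrow> alpha0 k"
    and XtX_lim: "\<And>a b. a < e \<Longrightarrow> b < e \<Longrightarrow>
       (\<lambda>n. (\<Sum>i<n. X n i a * X n i b) / real n) \<longlonglongrightarrow> Sigma a b"
    and Sigma_pd: "posdef e Sigma"
    and onesX_lim: "\<And>k. k < e \<Longrightarrow> (\<lambda>n. (\<Sum>i<n. X n i k) / real n) \<longlonglongrightarrow> Theta k"
    and maxrow: "(\<lambda>n. Max ((\<lambda>i. vnorm e (X n i)) ` {..<n}) / real n powr (1/3)) \<longlonglongrightarrow> 0"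
  shows "(\<forall>\<delta>>0. \<exists>K N. \<forall>n\<ge>N.
            measure (M n) {\<omega> \<in> space (M n).
               mat_opnorm (Suc p) e (crossprod {..<n} (Ztilde (Zmat e (X n) Gam (E n \<omega>))) (X n))
                 \<le> K * real n} \<ge> 1 - \<delta>)
       \<and> (\<forall>\<eta>>0. (\<lambda>n. measure (M n) {\<omega> \<in> space (M n).
            Max ((\<lambda>r. mat_opnorm (Suc p) e
                   (\<lambda>a b. crossprod {..<n} (Ztilde (Zmat e (X n) Gam (E n \<omega>))) (X n) a b
                        - crossprod ({..<n} - {r}) (Ztilde (Zmat e (X n) Gam (E n \<omega>))) (X n) a b))
                 ` {..<n}) \<le> \<eta> * real n}) \<longlonglongrightarrow> 1)"
proof -
  have gram: "\<And>k. k < e \<Longrightarrow> (\<lambda>n. (\<Sum>i<n. X n i k * X n i k) / real n) \<longlonglongrightarrow> Sigma k k"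
    using XtX_lim by blast
  show ?thesis
    using crossprod_Ztilde_bounded_in_probability[where M = M and E = E and X = X,
        OF prob sigz2 distE gram]
      leave_one_out_crossprod_Ztilde_small_in_probability[where M = M and E = E and X = X,
        OF prob sigz2 distE maxrow]
    by blast
qed

end
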